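(* A CPTP map $\mathcal M:\mathbf L(\mathcal H_X\otimes\mathcal H_Y)\to\mathbf L(\mathcal H_A\otimes\mathcal H_B)$ belongs to $\mathrm{LOCC}^*$ if and only if it can be written as $\mathcal M=\sum_{a,b}\mathcal A_{a|b}\otimes\mathcal B_{b|a}$, where for each $b$ the family $\{\mathcal A_{a|b}\}_a$ is a quantum instrument $\mathbf L(\mathcal H_X)\to\mathbf L(\mathcal H_A)$ and for each $a$ the family $\{\mathcal B_{b|a}\}_b$ is a quantum instrument $\mathbf L(\mathcal H_Y)\to\mathbf L(\mathcal H_B)$ (finite index sets).
   Context: A quantum instrument with classical input $i$ is a family $\{\mathcal A_{o|i}\}_o$ of completely positive linear maps with $\sum_o\mathcal A_{o|i}$ trace preserving for each $i$. $\mathrm{LOCC}^*$ is the set of CPTP maps of the form $\sum_{i_A,i_B,o_A,o_B}p(i_A,i_B|o_A,o_B)\,\mathcal A_{o_A|i_A}\otimes\mathcal B_{o_B|i_B}$ with instruments $\{\mathcal A_{o_A|i_A}\}_{o_A}$ (on Alice's side, $\mathbf L(\mathcal H_X)\to\mathbf L(\mathcal H_A)$), $\{\mathcal B_{o_B|i_B}\}_{o_B}$ (Bob's side, $\mathbf L(\mathcal H_Y)\to\mathbf L(\mathcal H_B)$) and a conditional probability distribution $p(i_A,i_B|o_A,o_B)$ over finite sets. *)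

theory Defs
  imports Complex_Main
begin

text \<open>Finite-dimensional Hilbert spaces are modelled by finite index types; an operator
  in L(H) with H = C^'i is a complex matrix 'i => 'i => complex.\<close>

type_synonym 'i cmat = "'i \<Rightarrow> 'i \<Rightarrow> complex"

definition mtrace :: "('i::finite) cmat \<Rightarrow> complex" where
  "mtrace M = (\<Sum>i\<in>UNIV. M i i)"

definition psd_on :: "'i set \<Rightarrow> 'i cmat \<Rightarrow> bool" where
  "psd_on S M \<longleftrightarrow> (\<forall>v::'i \<Rightarrow> complex.
      (\<Sum>i\<in>S. \<Sum>j\<in>S. cnj (v i) * M i j * v j) \<in> \<real> \<and>
      0 \<le> Re (\<Sum>i\<in>S. \<Sum>j\<in>S. cnj (v i) * M i j * v j))"

definition clinear_map :: "('i cmat \<Rightarrow> 'j cmat) \<Rightarrow> bool" where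
  "clinear_map F \<longleftrightarrow> (\<forall>c M N. F (\<lambda>i j. c * M i j + N i j) = (\<lambda>a b. c * F M a b + F N a b))"

text \<open>Complete positivity: for every ancilla dimension n, id_{M_n} \<otimes> F maps positive
  operators to positive operators (block (k,l) of the output is F of block (k,l)).\<close>
definition completely_positive :: "(('i::finite) cmat \<Rightarrow> ('j::finite) cmat) \<Rightarrow> bool" where
  "completely_positive F \<longleftrightarrow> (\<forall>n::nat. \<forall>M :: (nat \<times> 'i) cmat.
     psd_on ({..<n} \<times> UNIV) M \<longrightarrow>
     psd_on ({..<n} \<times> UNIV) (\<lambda>(k,a) (l,b). F (\<lambda>x y. M (k,x) (l,y)) a b))"

definition trace_preserving :: "(('i::finite) cmat \<Rightarrow> ('j::finite) cmat) \<Rightarrow> bool" where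
  "trace_preserving F \<longleftrightarrow> (\<forall>M. mtrace (F M) = mtrace M)"

definition cp_map :: "(('i::finite) cmat \<Rightarrow> ('j::finite) cmat) \<Rightarrow> bool" where
  "cp_map F \<longleftrightarrow> clinear_map F \<and> completely_positive F"

definition cptp :: "(('i::finite) cmat \<Rightarrow> ('j::finite) cmat) \<Rightarrow> bool" where
  "cptp F \<longleftrightarrow> cp_map F \<and> trace_preserving F"

definition instrument :: "'o set \<Rightarrow> ('o \<Rightarrow> ('i::finite) cmat \<Rightarrow> ('j::finite) cmat) \<Rightarrow> bool" where
  "instrument Os A \<longleftrightarrow> finite Os \<and> (\<forall>k\<in>Os. cp_map (A k)) \<and>
     trace_preserving (\<lambda>M a b. \<Sum>k\<in>Os. A k M a b)"

definition munit :: "'i \<Rightarrow> 'i \<Rightarrow> 'i cmat" where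
  "munit x x' = (\<lambda>i j. if i = x \<and> j = x' then 1 else 0)"

text \<open>Tensor product of linear maps, defined as the linear extension of
  (A \<otimes> B)(E_{xx'} \<otimes> E_{yy'}) = A(E_{xx'}) \<otimes> B(E_{yy'}).\<close>
definition tensor_map ::
  "(('x::finite) cmat \<Rightarrow> 'a cmat) \<Rightarrow> (('y::finite) cmat \<Rightarrow> 'b cmat) \<Rightarrow> ('x \<times> 'y) cmat \<Rightarrow> ('a \<times> 'b) cmat" where
  "tensor_map A B M = (\<lambda>(a,b) (a',b'). \<Sum>x\<in>UNIV. \<Sum>x'\<in>UNIV. \<Sum>y\<in>UNIV. \<Sum>y'\<in>UNIV.
      M (x,y) (x',y') * A (munit x x') a a' * B (munit y y') b b')"

definition LOCC_star ::
  "((('x::finite) \<times> ('y::finite)) cmat \<Rightarrow> (('a::finite) \<times> ('b::finite)) cmat) \<Rightarrow> bool" where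
  "LOCC_star M \<longleftrightarrow> cptp M \<and>
    (\<exists>(IA::nat set) (IB::nat set) (OA::nat set) (OB::nat set)
       (p :: nat \<Rightarrow> nat \<Rightarrow> nat \<Rightarrow> nat \<Rightarrow> real)
       (A :: nat \<Rightarrow> nat \<Rightarrow> 'x cmat \<Rightarrow> 'a cmat) (B :: nat \<Rightarrow> nat \<Rightarrow> 'y cmat \<Rightarrow> 'b cmat).
       finite IA \<and> finite IB \<and> finite OA \<and> finite OB \<and>
       (\<forall>iA\<in>IA. instrument OA (\<lambda>oA. A oA iA)) \<and>
       (\<forall>iB\<in>IB. instrument OB (\<lambda>oB. B oB iB)) \<and>
       (\<forall>oA\<in>OA. \<forall>oB\<in>OB. (\<forall>iA\<in>IA. \<forall>iB\<in>IB. 0 \<le> p iA iB oA oB) \<and>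
            (\<Sum>iA\<in>IA. \<Sum>iB\<in>IB. p iA iB oA oB) = 1) \<and>
       M = (\<lambda>X u v. \<Sum>iA\<in>IA. \<Sum>iB\<in>IB. \<Sum>oA\<in>OA. \<Sum>oB\<in>OB.
              complex_of_real (p iA iB oA oB) * tensor_map (A oA iA) (B oB iB) X u v))"

end

theory Submission
  imports Defs "HOL-Library.Nat_Bijection"
begin

text \<open>Given an LOCC* map with correlation table p(iA,iB|oA,oB), factor it as
  r(iA|oA,oB) q(iB|oA,oB,iA). Alice's new outcome is a = (oA,iB) and Bob's is b = (oB,iA):
  Alice uses her instrument for input iA (read off b) and reweights by q, while Bob uses his
  instrument for iB (read off a) and reweights by r. Since q and r are conditional
  distributions in the new outcome components, these are again instruments, and summing over
  a, b recovers the LOCC* sum. Conversely, a cross-conditioned sum is the LOCC* map whose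
  table p(iA,iB|oA,oB) feeds each party the other's outcome deterministically.\<close>

lemma psd_on_scaleR:
  assumes "psd_on S M" "0 \<le> s"
  shows "psd_on S (\<lambda>i j. complex_of_real s * M i j)"
  unfolding psd_on_def
proof
  fix v :: "_ \<Rightarrow> complex"
  let ?Q = "\<Sum>i\<in>S. \<Sum>j\<in>S. cnj (v i) * M i j * v j"
  have eq: "(\<Sum>i\<in>S. \<Sum>j\<in>S. cnj (v i) * (complex_of_real s * M i j) * v j) = complex_of_real s * ?Q"
    by (simp add: sum_distrib_left mult_ac)
  have "?Q \<in> \<real>" "0 \<le> Re ?Q" using assms(1) unfolding psd_on_def by auto
  then show "(\<Sum>i\<in>S. \<Sum>j\<in>S. cnj (v i) * (complex_of_real s * M i j) * v j) \<in> \<real> \<and>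
        0 \<le> Re (\<Sum>i\<in>S. \<Sum>j\<in>S. cnj (v i) * (complex_of_real s * M i j) * v j)"
    unfolding eq using assms(2) by (auto intro: Reals_mult)
qed

lemma cp_map_scaleR:
  fixes F :: "('i::finite) cmat \<Rightarrow> ('j::finite) cmat"
  assumes "cp_map F" "0 \<le> s"
  shows "cp_map (\<lambda>X i j. complex_of_real s * F X i j)"
proof -
  have lin: "clinear_map F" and cp: "completely_positive F"
    using assms(1) by (auto simp: cp_map_def)
  have "clinear_map (\<lambda>X i j. complex_of_real s * F X i j)"
    using lin unfolding clinear_map_def by (simp add: algebra_simps)
  moreover have "completely_positive (\<lambda>X i j. complex_of_real s * F X i j)"
    unfolding completely_positive_def
  proof (intro allI impI)
    fix n :: nat and M :: "(nat \<times> 'i) cmat"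
    assume "psd_on ({..<n} \<times> UNIV) M"
    then have "psd_on ({..<n} \<times> UNIV) (\<lambda>(k,a) (l,b). F (\<lambda>x y. M (k,x) (l,y)) a b)"
      using cp unfolding completely_positive_def by blast
    from psd_on_scaleR[OF this assms(2)]
    show "psd_on ({..<n} \<times> UNIV) (\<lambda>(k,a) (l,b). complex_of_real s * F (\<lambda>x y. M (k,x) (l,y)) a b)"
      by (simp add: case_prod_beta')
  qed
  ultimately show ?thesis by (simp add: cp_map_def)
qed

lemma tensor_map_scale:
  "tensor_map (\<lambda>X i j. c * A X i j) (\<lambda>X i j. d * B X i j) X u v = c * d * tensor_map A B X u v"
  by (cases u; cases v) (simp add: tensor_map_def sum_distrib_left mult_ac)

lemma not_trace_preserving_zero:
  "\<not> trace_preserving (\<lambda>(X :: ('i::finite) cmat) (u :: 'j::finite) v. 0)"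
proof
  assume "trace_preserving (\<lambda>(X :: 'i cmat) (u :: 'j) v. 0)"
  then have "mtrace (\<lambda>(u :: 'j) v. 0 :: complex) = mtrace (\<lambda>(i :: 'i) j. if i = j then 1 else 0 :: complex)"
    unfolding trace_preserving_def by (rule spec)
  then show False by (simp add: mtrace_def)
qed

text \<open>The outcome k encodes a pair (e, j): the original outcome e together with an
  extra label j drawn with probability w e j.\<close>
definition refined_instrument ::
  "(nat \<Rightarrow> nat \<Rightarrow> real) \<Rightarrow> (nat \<Rightarrow> ('i::finite) cmat \<Rightarrow> ('j::finite) cmat) \<Rightarrow> nat \<Rightarrow> 'i cmat \<Rightarrow> 'j cmat"
  where "refined_instrument w A k =
    (case prod_decode k of (e, j) \<Rightarrow> \<lambda>X u v. complex_of_real (w e j) * A e X u v)"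

lemma refined_instrument_prod_encode [simp]:
  "refined_instrument w A (prod_encode (e, j)) = (\<lambda>X u v. complex_of_real (w e j) * A e X u v)"
  by (simp add: refined_instrument_def)

lemma sum_prod_encode_image:
  assumes "finite S" "finite T"
  shows "(\<Sum>k\<in>prod_encode ` (S \<times> T). f k) = (\<Sum>s\<in>S. \<Sum>t\<in>T. f (prod_encode (s, t)))"
  using assms by (simp add: sum.reindex inj_prod_encode sum.cartesian_product)

lemma instrument_refined_instrument:
  assumes A: "instrument Os A" and J: "finite J"
    and w_nonneg: "\<And>e j. e \<in> Os \<Longrightarrow> j \<in> J \<Longrightarrow> 0 \<le> w e j"
    and w_sum: "\<And>e. e \<in> Os \<Longrightarrow> (\<Sum>j\<in>J. w e j) = 1"
  shows "instrument (prod_encode ` (Os \<times> J)) (refined_instrument w A)"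
proof -
  have Os: "finite Os" and cp: "\<And>e. e \<in> Os \<Longrightarrow> cp_map (A e)"
    using A by (auto simp: instrument_def)
  have "(\<Sum>k\<in>prod_encode ` (Os \<times> J). refined_instrument w A k X u v) = (\<Sum>e\<in>Os. A e X u v)"
    for X u v
  proof -
    have "(\<Sum>k\<in>prod_encode ` (Os \<times> J). refined_instrument w A k X u v)
        = (\<Sum>e\<in>Os. complex_of_real (\<Sum>j\<in>J. w e j) * A e X u v)"
      using Os J by (simp add: sum_prod_encode_image sum_distrib_right)
    then show ?thesis using w_sum by simp
  qed
  then show ?thesis
    using A Os J w_nonneg by (force simp: instrument_def intro: cp_map_scaleR cp)
qed

lemma conditional_factorization:
  fixes p :: "'i \<Rightarrow> 'j \<Rightarrow> real"
  assumes J: "finite J" "J \<noteq> {}" and p_nonneg: "\<And>i j. i \<in> I \<Longrightarrow> j \<in> J \<Longrightarrow> 0 \<le> p i j"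
  obtains q where "\<And>i j. i \<in> I \<Longrightarrow> j \<in> J \<Longrightarrow> 0 \<le> q i j"
    and "\<And>i. i \<in> I \<Longrightarrow> (\<Sum>j\<in>J. q i j) = 1"
    and "\<And>i j. i \<in> I \<Longrightarrow> j \<in> J \<Longrightarrow> q i j * (\<Sum>j'\<in>J. p i j') = p i j"
proof -
  obtain j0 where j0: "j0 \<in> J" using J by blast
  let ?r = "\<lambda>i. \<Sum>j\<in>J. p i j"
  \<comment> \<open>Where the marginal vanishes any distribution works; take the point mass at j0.\<close>
  define q where "q i j = (if ?r i = 0 then (if j = j0 then 1 else 0) else p i j / ?r i)" for i j
  have "0 \<le> q i j" if "i \<in> I" "j \<in> J" for i j
    using that p_nonneg by (auto simp: q_def intro!: divide_nonneg_nonneg sum_nonneg)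
  moreover have "(\<Sum>j\<in>J. q i j) = 1" if "i \<in> I" for i
    using J j0 by (cases "?r i = 0") (simp_all add: q_def flip: sum_divide_distrib)
  moreover have "q i j * ?r i = p i j" if "i \<in> I" "j \<in> J" for i j
  proof (cases "?r i = 0")
    case True
    then have "p i j = 0"
      using sum_nonneg_eq_0_iff[OF J(1)] p_nonneg that by blast
    then show ?thesis using True by simp
  qed (simp add: q_def)
  ultimately show thesis by (rule that)
qed

definition cross_instrument_decomposition ::
  "((('x::finite) \<times> ('y::finite)) cmat \<Rightarrow> (('a::finite) \<times> ('b::finite)) cmat) \<Rightarrow> bool" where
  "cross_instrument_decomposition M \<longleftrightarrow>
    (\<exists>(Ia::nat set) (Ib::nat set) (A :: nat \<Rightarrow> nat \<Rightarrow> 'x cmat \<Rightarrow> 'a cmat)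
        (B :: nat \<Rightarrow> nat \<Rightarrow> 'y cmat \<Rightarrow> 'b cmat).
       finite Ia \<and> finite Ib \<and>
       (\<forall>b\<in>Ib. instrument Ia (\<lambda>a. A a b)) \<and>
       (\<forall>a\<in>Ia. instrument Ib (\<lambda>b. B b a)) \<and>
       M = (\<lambda>X u v. \<Sum>a\<in>Ia. \<Sum>b\<in>Ib. tensor_map (A a b) (B b a) X u v))"

lemma LOCC_star_factorized_table:
  fixes M :: "(('x::finite) \<times> ('y::finite)) cmat \<Rightarrow> (('a::finite) \<times> ('b::finite)) cmat"
  assumes "LOCC_star M"
  obtains IA IB OA OB and q :: "nat \<times> nat \<times> nat \<Rightarrow> nat \<Rightarrow> real" and r :: "nat \<Rightarrow> nat \<Rightarrow> nat \<Rightarrow> real"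
    and A :: "nat \<Rightarrow> nat \<Rightarrow> 'x cmat \<Rightarrow> 'a cmat" and B :: "nat \<Rightarrow> nat \<Rightarrow> 'y cmat \<Rightarrow> 'b cmat"
  where "finite IA" "finite IB" "finite OA" "finite OB"
    and "\<forall>iA\<in>IA. instrument OA (\<lambda>oA. A oA iA)" and "\<forall>iB\<in>IB. instrument OB (\<lambda>oB. B oB iB)"
    and "\<And>iA oA oB iB. iA \<in> IA \<Longrightarrow> oA \<in> OA \<Longrightarrow> oB \<in> OB \<Longrightarrow> iB \<in> IB \<Longrightarrow> 0 \<le> q (iA, oA, oB) iB"
    and "\<And>iA oA oB. iA \<in> IA \<Longrightarrow> oA \<in> OA \<Longrightarrow> oB \<in> OB \<Longrightarrow> (\<Sum>iB\<in>IB. q (iA, oA, oB) iB) = 1"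
    and "\<And>iA oA oB. iA \<in> IA \<Longrightarrow> oA \<in> OA \<Longrightarrow> oB \<in> OB \<Longrightarrow> 0 \<le> r iA oA oB"
    and "\<And>oA oB. oA \<in> OA \<Longrightarrow> oB \<in> OB \<Longrightarrow> (\<Sum>iA\<in>IA. r iA oA oB) = 1"
    and "M = (\<lambda>X u v. \<Sum>iA\<in>IA. \<Sum>iB\<in>IB. \<Sum>oA\<in>OA. \<Sum>oB\<in>OB.
           complex_of_real (q (iA, oA, oB) iB * r iA oA oB) * tensor_map (A oA iA) (B oB iB) X u v)"
proof -
  obtain IA IB OA OB and p :: "nat \<Rightarrow> nat \<Rightarrow> nat \<Rightarrow> nat \<Rightarrow> real"
    and A :: "nat \<Rightarrow> nat \<Rightarrow> 'x cmat \<Rightarrow> 'a cmat" and B :: "nat \<Rightarrow> nat \<Rightarrow> 'y cmat \<Rightarrow> 'b cmat" where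
    fin: "finite IA" "finite IB" "finite OA" "finite OB" and
    instr: "\<forall>iA\<in>IA. instrument OA (\<lambda>oA. A oA iA)" "\<forall>iB\<in>IB. instrument OB (\<lambda>oB. B oB iB)" and
    p_distr: "\<forall>oA\<in>OA. \<forall>oB\<in>OB. (\<forall>iA\<in>IA. \<forall>iB\<in>IB. 0 \<le> p iA iB oA oB) \<and>
            (\<Sum>iA\<in>IA. \<Sum>iB\<in>IB. p iA iB oA oB) = 1" and
    M_eq: "M = (\<lambda>X u v. \<Sum>iA\<in>IA. \<Sum>iB\<in>IB. \<Sum>oA\<in>OA. \<Sum>oB\<in>OB.
              complex_of_real (p iA iB oA oB) * tensor_map (A oA iA) (B oB iB) X u v)"
    using assms unfolding LOCC_star_def by blast
  have "IB \<noteq> {}"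
  proof
    assume "IB = {}"
    then have "M = (\<lambda>X u v. 0)" using M_eq by simp
    moreover have "trace_preserving M" using assms by (simp add: LOCC_star_def cptp_def)
    ultimately show False using not_trace_preserving_zero by blast
  qed
  define r where "r iA oA oB = (\<Sum>iB\<in>IB. p iA iB oA oB)" for iA oA oB
  obtain q where q_nonneg: "\<And>t iB. t \<in> IA \<times> OA \<times> OB \<Longrightarrow> iB \<in> IB \<Longrightarrow> 0 \<le> q t iB"
    and q_sum: "\<And>t. t \<in> IA \<times> OA \<times> OB \<Longrightarrow> (\<Sum>iB\<in>IB. q t iB) = 1"
    and q_r: "\<And>t iB. t \<in> IA \<times> OA \<times> OB \<Longrightarrow> iB \<in> IB \<Longrightarrow>
      q t iB * (\<Sum>iB'\<in>IB. case t of (iA, oA, oB) \<Rightarrow> p iA iB' oA oB) = (case t of (iA, oA, oB) \<Rightarrow> p iA iB oA oB)"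
    by (rule conditional_factorization[OF fin(2) \<open>IB \<noteq> {}\<close>, of "IA \<times> OA \<times> OB"
        "\<lambda>(iA, oA, oB) iB. p iA iB oA oB"]) (use p_distr in auto)
  have r_nonneg: "0 \<le> r iA oA oB" if "iA \<in> IA" "oA \<in> OA" "oB \<in> OB" for iA oA oB
    unfolding r_def using p_distr that by (auto intro: sum_nonneg)
  have r_sum: "(\<Sum>iA\<in>IA. r iA oA oB) = 1" if "oA \<in> OA" "oB \<in> OB" for oA oB
    unfolding r_def using p_distr that by auto
  have M_qr: "M = (\<lambda>X u v. \<Sum>iA\<in>IA. \<Sum>iB\<in>IB. \<Sum>oA\<in>OA. \<Sum>oB\<in>OB.
           complex_of_real (q (iA, oA, oB) iB * r iA oA oB) * tensor_map (A oA iA) (B oB iB) X u v)"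
  proof -
    have "q (iA, oA, oB) iB * r iA oA oB = p iA iB oA oB"
      if "iA \<in> IA" "oA \<in> OA" "oB \<in> OB" "iB \<in> IB" for iA iB oA oB
      using q_r[of "(iA, oA, oB)" iB] that by (simp add: r_def)
    then show ?thesis unfolding M_eq by (intro ext sum.cong refl) simp
  qed
  show thesis
    by (rule that[OF fin instr _ _ r_nonneg r_sum M_qr]) (simp_all add: q_nonneg q_sum)
qed

lemma cross_instrument_decomposition_of_factorized_table:
  fixes A :: "nat \<Rightarrow> nat \<Rightarrow> ('x::finite) cmat \<Rightarrow> ('a::finite) cmat"
    and B :: "nat \<Rightarrow> nat \<Rightarrow> ('y::finite) cmat \<Rightarrow> ('b::finite) cmat"
  assumes fin: "finite IA" "finite IB" "finite OA" "finite OB"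
    and instr_A: "\<forall>iA\<in>IA. instrument OA (\<lambda>oA. A oA iA)"
    and instr_B: "\<forall>iB\<in>IB. instrument OB (\<lambda>oB. B oB iB)"
    and q_nonneg: "\<And>iA oA oB iB. iA \<in> IA \<Longrightarrow> oA \<in> OA \<Longrightarrow> oB \<in> OB \<Longrightarrow> iB \<in> IB \<Longrightarrow> 0 \<le> q (iA, oA, oB) iB"
    and q_sum: "\<And>iA oA oB. iA \<in> IA \<Longrightarrow> oA \<in> OA \<Longrightarrow> oB \<in> OB \<Longrightarrow> (\<Sum>iB\<in>IB. q (iA, oA, oB) iB) = 1"
    and r_nonneg: "\<And>iA oA oB. iA \<in> IA \<Longrightarrow> oA \<in> OA \<Longrightarrow> oB \<in> OB \<Longrightarrow> 0 \<le> r iA oA oB"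
    and r_sum: "\<And>oA oB. oA \<in> OA \<Longrightarrow> oB \<in> OB \<Longrightarrow> (\<Sum>iA\<in>IA. r iA oA oB) = 1"
  shows "cross_instrument_decomposition (\<lambda>X u v. \<Sum>iA\<in>IA. \<Sum>iB\<in>IB. \<Sum>oA\<in>OA. \<Sum>oB\<in>OB.
           complex_of_real (q (iA, oA, oB) iB * r iA oA oB) * tensor_map (A oA iA) (B oB iB) X u v)"
proof -
  define Ia where "Ia = prod_encode ` (OA \<times> IB)"
  define Ib where "Ib = prod_encode ` (OB \<times> IA)"
  define A' where "A' a b = (case prod_decode b of (oB, iA) \<Rightarrow>
    refined_instrument (\<lambda>oA iB. q (iA, oA, oB) iB) (\<lambda>oA. A oA iA) a)" for a b
  define B' where "B' b a = (case prod_decode a of (oA, iB) \<Rightarrow>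
    refined_instrument (\<lambda>oB iA. r iA oA oB) (\<lambda>oB. B oB iB) b)" for a b
  have instr_A': "\<forall>b\<in>Ib. instrument Ia (\<lambda>a. A' a b)"
  proof
    fix b assume "b \<in> Ib"
    then obtain oB iA where "b = prod_encode (oB, iA)" "oB \<in> OB" "iA \<in> IA"
      unfolding Ib_def by blast
    then show "instrument Ia (\<lambda>a. A' a b)" unfolding A'_def Ia_def
      using instr_A fin q_nonneg q_sum by (auto intro!: instrument_refined_instrument)
  qed
  have instr_B': "\<forall>a\<in>Ia. instrument Ib (\<lambda>b. B' b a)"
  proof
    fix a assume "a \<in> Ia"
    then obtain oA iB where "a = prod_encode (oA, iB)" "oA \<in> OA" "iB \<in> IB"
      unfolding Ia_def by blast
    then show "instrument Ib (\<lambda>b. B' b a)" unfolding B'_def Ib_def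
      using instr_B fin r_nonneg r_sum by (auto intro!: instrument_refined_instrument)
  qed
  have sum_eq: "(\<Sum>a\<in>Ia. \<Sum>b\<in>Ib. tensor_map (A' a b) (B' b a) X u v) =
      (\<Sum>iA\<in>IA. \<Sum>iB\<in>IB. \<Sum>oA\<in>OA. \<Sum>oB\<in>OB.
         complex_of_real (q (iA, oA, oB) iB * r iA oA oB) * tensor_map (A oA iA) (B oB iB) X u v)"
    for X u v
  proof -
    have "A' (prod_encode (oA, iB)) (prod_encode (oB, iA))
        = (\<lambda>X u v. complex_of_real (q (iA, oA, oB) iB) * A oA iA X u v)"
      and "B' (prod_encode (oB, iA)) (prod_encode (oA, iB))
        = (\<lambda>X u v. complex_of_real (r iA oA oB) * B oB iB X u v)" for oA iB oB iA
      by (simp_all add: A'_def B'_def)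
    then have "(\<Sum>a\<in>Ia. \<Sum>b\<in>Ib. tensor_map (A' a b) (B' b a) X u v) =
       (\<Sum>oA\<in>OA. \<Sum>iB\<in>IB. \<Sum>oB\<in>OB. \<Sum>iA\<in>IA.
          complex_of_real (q (iA, oA, oB) iB * r iA oA oB) * tensor_map (A oA iA) (B oB iB) X u v)"
      unfolding Ia_def Ib_def using fin by (simp add: sum_prod_encode_image tensor_map_scale)
    then show ?thesis
      by (simp only: sum.swap[where A = OB and B = IA] sum.swap[where A = IB and B = IA]
          sum.swap[where A = OA and B = IA] sum.swap[where A = OA and B = IB])
  qed
  have fin': "finite Ia" "finite Ib" using fin by (simp_all add: Ia_def Ib_def)
  show ?thesis
    unfolding cross_instrument_decomposition_def
    by (rule exI[of _ Ia], rule exI[of _ Ib], rule exI[of _ A'], rule exI[of _ B'])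
      (simp add: fin' instr_A' instr_B' sum_eq)
qed

lemma LOCC_star_imp_cross_instrument_decomposition:
  assumes "LOCC_star M"
  shows "cross_instrument_decomposition M"
  by (rule LOCC_star_factorized_table[OF assms], hypsubst,
      rule cross_instrument_decomposition_of_factorized_table, assumption+)

lemma cross_instrument_decomposition_imp_LOCC_star:
  fixes M :: "(('x::finite) \<times> ('y::finite)) cmat \<Rightarrow> (('a::finite) \<times> ('b::finite)) cmat"
  assumes "cptp M" "cross_instrument_decomposition M"
  shows "LOCC_star M"
proof -
  obtain Ia Ib and A :: "nat \<Rightarrow> nat \<Rightarrow> 'x cmat \<Rightarrow> 'a cmat" and B :: "nat \<Rightarrow> nat \<Rightarrow> 'y cmat \<Rightarrow> 'b cmat"
    where fin: "finite Ia" "finite Ib"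
      and instr_A: "\<forall>b\<in>Ib. instrument Ia (\<lambda>a. A a b)"
      and instr_B: "\<forall>a\<in>Ia. instrument Ib (\<lambda>b. B b a)"
      and M_eq: "M = (\<lambda>X u v. \<Sum>a\<in>Ia. \<Sum>b\<in>Ib. tensor_map (A a b) (B b a) X u v)"
    using assms(2) unfolding cross_instrument_decomposition_def by blast
  \<comment> \<open>Each party's input is the other party's outcome: iA = oB and iB = oA.\<close>
  define p :: "nat \<Rightarrow> nat \<Rightarrow> nat \<Rightarrow> nat \<Rightarrow> real"
    where "p iA iB oA oB = (if iB = oA then if iA = oB then 1 else 0 else 0)" for iA iB oA oB
  have p_sum: "(\<Sum>iA\<in>Ib. \<Sum>iB\<in>Ia. p iA iB oA oB) = 1" if "oA \<in> Ia" "oB \<in> Ib" for oA oB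
    using that fin by (simp add: p_def)
  have M_LOCC: "M = (\<lambda>X u v. \<Sum>iA\<in>Ib. \<Sum>iB\<in>Ia. \<Sum>oA\<in>Ia. \<Sum>oB\<in>Ib.
              complex_of_real (p iA iB oA oB) * tensor_map (A oA iA) (B oB iB) X u v)"
  proof (intro ext)
    fix X u v
    have "(\<Sum>oA\<in>Ia. \<Sum>oB\<in>Ib. complex_of_real (p iA iB oA oB) * tensor_map (A oA iA) (B oB iB) X u v)
        = tensor_map (A iB iA) (B iA iB) X u v" if "iA \<in> Ib" "iB \<in> Ia" for iA iB
      using that fin by (simp add: p_def if_distrib[of complex_of_real] if_distrib[of "\<lambda>c. c * _"]
          sum.swap[where A = Ia] cong: if_cong)
    then show "M X u v = (\<Sum>iA\<in>Ib. \<Sum>iB\<in>Ia. \<Sum>oA\<in>Ia. \<Sum>oB\<in>Ib.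
              complex_of_real (p iA iB oA oB) * tensor_map (A oA iA) (B oB iB) X u v)"
      unfolding M_eq by (simp add: sum.swap[where A = Ia and B = Ib])
  qed
  have p_nonneg: "0 \<le> p iA iB oA oB" for iA iB oA oB by (simp add: p_def)
  show ?thesis
    unfolding LOCC_star_def
    by (rule conjI[OF assms(1)], rule exI[of _ Ib], rule exI[of _ Ia], rule exI[of _ Ia],
        rule exI[of _ Ib], rule exI[of _ p], rule exI[of _ A], rule exI[of _ B])
      (use fin instr_A instr_B p_sum p_nonneg M_LOCC in simp)
qed

theorem mainTheorem14:
  fixes M :: "(('x::finite) \<times> ('y::finite)) cmat \<Rightarrow> (('a::finite) \<times> ('b::finite)) cmat"
  assumes "cptp M"
  shows "LOCC_star M \<longleftrightarrow>
    (\<exists>(Ia::nat set) (Ib::nat set) (A :: nat \<Rightarrow> nat \<Rightarrow> 'x cmat \<Rightarrow> 'a cmat)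
        (B :: nat \<Rightarrow> nat \<Rightarrow> 'y cmat \<Rightarrow> 'b cmat).
       finite Ia \<and> finite Ib \<and>
       (\<forall>b\<in>Ib. instrument Ia (\<lambda>a. A a b)) \<and>
       (\<forall>a\<in>Ia. instrument Ib (\<lambda>b. B b a)) \<and>
       M = (\<lambda>X u v. \<Sum>a\<in>Ia. \<Sum>b\<in>Ib. tensor_map (A a b) (B b a) X u v))"
proof -
  have "LOCC_star M \<longleftrightarrow> cross_instrument_decomposition M"
    using LOCC_star_imp_cross_instrument_decomposition
      cross_instrument_decomposition_imp_LOCC_star[OF assms] by blast
  then show ?thesis unfolding cross_instrument_decomposition_def .
qed

end
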